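(* Let $d\geq 1$, let $p_1<\dots<p_d$ be the first $d$ prime numbers, let $N\geq 1$ be an integer, let $C>1$ and $\varepsilon\in\mathbb{R}$. Let $\mathbf{S}_1$ be the $(d+1)\times d$ matrix whose $i$-th column has entry $\ln p_i$ in row $i$, entry $C\ln p_i$ in row $d+1$ and zeros elsewhere, and let $\mathbf{t}=(0,\dots,0,C\ln N)^T$. Let $\mathbf{z}\in\mathbb{Z}^d$, put $$u=\prod_{1\le i\le d,\ z_i>0}p_i^{z_i},\qquad k=\prod_{1\le i\le d,\ z_i<0}p_i^{-z_i},$$ and suppose $\|\mathbf{S}_1\mathbf{z}-\mathbf{t}\|_1\leq\varepsilon$. Then $$|u-kN|\leq\frac{\sqrt{N}}{C}\exp\left(\frac{\varepsilon}{2}\right).$$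
   Context: $\ln$ is the natural logarithm, $\|\cdot\|_1$ the $\ell^1$ norm; empty products equal $1$. *)

theory Defs
  imports "HOL-Analysis.Analysis" "HOL-Computational_Algebra.Primes" "HOL-Library.Infinite_Set"
begin

text \<open>The i-th prime, 1-indexed: pr 1 = 2, pr 2 = 3, ...\<close>
definition pr :: "nat \<Rightarrow> nat" where
  "pr i = enumerate {q::nat. prime q} (i - 1)"

text \<open>The (d+1) x d matrix S_1 (rows 1..d+1, columns 1..d).\<close>
definition S1 :: "nat \<Rightarrow> real \<Rightarrow> nat \<Rightarrow> nat \<Rightarrow> real" where
  "S1 d C r c = (if r = c then ln (real (pr c))
                 else if r = d + 1 then C * ln (real (pr c)) else 0)"

definition tvec :: "nat \<Rightarrow> real \<Rightarrow> nat \<Rightarrow> nat \<Rightarrow> real" where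
  "tvec d C N r = (if r = d + 1 then C * ln (real N) else 0)"

definition resid_l1 :: "nat \<Rightarrow> real \<Rightarrow> nat \<Rightarrow> (nat \<Rightarrow> int) \<Rightarrow> real" where
  "resid_l1 d C N z =
     (\<Sum>r=1..d+1. \<bar>(\<Sum>c=1..d. S1 d C r c * real_of_int (z c)) - tvec d C N r\<bar>)"

end

theory Submission
  imports Defs
begin

text \<open>
  Write U, K for the two products and M = K N. The first d rows of S1 z - t contribute
  sum |z i| ln (p i) = ln U + ln K to the l1 norm, and the last row contributes C |ln U - ln M|.
  If u = v exp x with x \<ge> 0, then |u - v| = v (exp x - 1) and sqrt (u v) = v exp (x / 2), so the
  elementary inequality C (exp x - 1) \<le> exp ((C + 1) x / 2) gives
  |U - M| \<le> sqrt (U M) exp (C |ln U - ln M| / 2) / C. Finally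
  sqrt (U M) = sqrt N exp ((ln U + ln K) / 2), so the exponent is half the l1 norm.
\<close>

lemma exp_ge_tangent: "exp a * (1 + (y - a)) \<le> exp (y::real)"
proof -
  have "exp a * (1 + (y - a)) \<le> exp a * exp (y - a)"
    using exp_ge_add_one_self[of "y - a"] by (intro mult_left_mono) auto
  also have "\<dots> = exp y" by (simp flip: exp_add)
  finally show ?thesis .
qed

lemma exp_mult_ge_exp_minus_one:
  fixes b x :: real
  assumes b: "b > 1" and x: "x \<ge> 0"
  shows "(2 * b - 1) * (exp x - 1) \<le> exp (b * x)"
proof -
  \<comment> \<open>With t = exp x this says (2b - 1)(t - 1) \<le> t powr b; the tangent of t powr b at
    t = exp (1 / b) already lies above the line (2b - 1)(t - 1) for t \<ge> 1.\<close>
  define x0 where "x0 = 1 / b"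
  define E where "E = exp ((b - 1) * x0)"
  have "E > 0" unfolding E_def by simp
  have x0: "(b - 1) * x0 = 1 - x0" "b * x0 = 1"
    using b by (auto simp: x0_def field_simps)
  have "exp x * (x - x0) \<ge> exp x - exp x0"
    using exp_ge_tangent[of x x0] by (simp add: algebra_simps)
  then have "(b - 1) * (exp x * (x - x0)) \<ge> (b - 1) * (exp x - exp x0)"
    using b by (intro mult_left_mono) auto
  then have tangent_x: "exp x * (1 + (b - 1) * (x - x0)) \<ge> b * exp x - (b - 1) * exp x0"
    by (simp add: algebra_simps)
  have tangent_bx: "exp ((b - 1) * x) \<ge> E * (1 + (b - 1) * (x - x0))"
    using exp_ge_tangent[of "(b - 1) * x0" "(b - 1) * x"] by (simp add: E_def algebra_simps)
  have "exp (b * x) = exp x * exp ((b - 1) * x)"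
    by (simp flip: exp_add add: algebra_simps)
  also have "\<dots> \<ge> E * (exp x * (1 + (b - 1) * (x - x0)))"
    using tangent_bx by (simp add: mult_left_mono mult.left_commute)
  finally have "E * (b * exp x - (b - 1) * exp x0) \<le> exp (b * x)"
    using tangent_x \<open>E > 0\<close> by (meson mult_left_mono less_imp_le order_trans)
  have "E * b \<ge> 2 * b - 1"
  proof -
    have "(2 - x0) * b \<le> E * b"
      using exp_ge_add_one_self[of "(b - 1) * x0"] b x0 unfolding E_def
      by (intro mult_right_mono) auto
    then show ?thesis using x0 by (simp add: algebra_simps)
  qed
  have "(b - 1) * exp x0 \<le> b"
  proof -
    have "exp x0 * (1 - x0) \<le> exp x0 * exp (- x0)"
      using exp_ge_add_one_self[of "- x0"] by (intro mult_left_mono) auto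
    then have "b * exp x0 \<le> b * (1 + x0 * exp x0)"
      using b by (intro mult_left_mono) (auto simp: exp_minus algebra_simps)
    also have "\<dots> = b + exp x0"
      by (simp add: distrib_left mult.assoc[symmetric] x0(2))
    finally show ?thesis by (simp add: algebra_simps)
  qed
  have "(2 * b - 1) * (exp x - 1) \<le> E * b * (exp x - 1)"
    using \<open>E * b \<ge> 2 * b - 1\<close> x by (intro mult_right_mono) auto
  also have "\<dots> = E * (b * exp x - b)" by (simp add: algebra_simps)
  also have "\<dots> \<le> E * (b * exp x - (b - 1) * exp x0)"
    using \<open>(b - 1) * exp x0 \<le> b\<close> \<open>E > 0\<close> by (intro mult_left_mono) auto
  also have "\<dots> \<le> exp (b * x)" by fact
  finally show ?thesis .
qed

lemma abs_diff_le_sqrt_mult_exp_abs_ln_diff: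
  fixes u v C :: real
  assumes "u > 0" and "v > 0" and "C > 1"
  shows "\<bar>u - v\<bar> \<le> sqrt (u * v) * exp (C * \<bar>ln u - ln v\<bar> / 2) / C"
proof -
  have ordered: "\<bar>u - v\<bar> \<le> sqrt (u * v) * exp (C * \<bar>ln u - ln v\<bar> / 2) / C"
    if "v \<le> u" "v > 0" for u v :: real
  proof -
    define x where "x = ln u - ln v"
    have "x \<ge> 0" and u: "u = v * exp x"
      using that by (simp_all add: x_def exp_diff)
    have "\<bar>ln u - ln v\<bar> = x" using \<open>x \<ge> 0\<close> by (simp add: x_def)
    have "sqrt (u * v) = sqrt ((v * exp (x / 2))\<^sup>2)"
      by (simp add: u power2_eq_square mult_ac flip: exp_add)
    also have "\<dots> = v * exp (x / 2)" using \<open>v > 0\<close> by simp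
    finally have sqrt_uv: "sqrt (u * v) = v * exp (x / 2)" .
    have "C * (exp x - 1) \<le> exp ((C + 1) / 2 * x)"
      using exp_mult_ge_exp_minus_one[of "(C + 1) / 2" x] \<open>C > 1\<close> \<open>x \<ge> 0\<close>
      by (simp add: field_simps)
    also have "\<dots> = exp (x / 2) * exp (C * x / 2)"
      by (simp add: field_simps flip: exp_add)
    finally have "exp x - 1 \<le> exp (x / 2) * exp (C * x / 2) / C"
      using \<open>C > 1\<close> by (simp add: field_simps)
    then have "v * (exp x - 1) \<le> v * (exp (x / 2) * exp (C * x / 2) / C)"
      using \<open>v > 0\<close> by (intro mult_left_mono) auto
    moreover have "\<bar>u - v\<bar> = v * (exp x - 1)"
      using \<open>x \<ge> 0\<close> \<open>v > 0\<close> by (simp add: u algebra_simps)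
    ultimately have "\<bar>u - v\<bar> \<le> v * (exp (x / 2) * exp (C * x / 2) / C)" by linarith
    then show ?thesis unfolding \<open>\<bar>ln u - ln v\<bar> = x\<close> sqrt_uv
      by (simp only: times_divide_eq_right mult.assoc)
  qed
  show ?thesis
  proof (cases "v \<le> u")
    case True
    then show ?thesis using ordered \<open>v > 0\<close> by blast
  next
    case False
    then have "\<bar>v - u\<bar> \<le> sqrt (v * u) * exp (C * \<bar>ln v - ln u\<bar> / 2) / C"
      using ordered[of u v] \<open>u > 0\<close> by simp
    then show ?thesis
      by (simp only: abs_minus_commute[of v] abs_minus_commute[of "ln v"] mult.commute[of v])
  qed
qed

lemma abs_diff_mult_le_sqrt_exp:
  fixes u k n C :: real
  assumes "u > 0" and "k > 0" and "n > 0" and "C > 1"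
  shows "\<bar>u - k * n\<bar> \<le> sqrt n / C * exp ((ln u + ln k + C * \<bar>ln u - ln (k * n)\<bar>) / 2)"
proof -
  have "(exp ((ln u + ln k) / 2))\<^sup>2 = exp (ln u + ln k)"
    by (simp add: power2_eq_square flip: exp_add)
  also have "\<dots> = u * k" using assms by (simp add: exp_add)
  finally have "sqrt (u * k) = exp ((ln u + ln k) / 2)"
    by (metis exp_ge_zero real_sqrt_unique)
  then have "sqrt (u * (k * n)) = sqrt n * exp ((ln u + ln k) / 2)"
    unfolding mult.assoc[of u k n, symmetric] real_sqrt_mult[of "u * k" n] by simp
  then show ?thesis
    using abs_diff_le_sqrt_mult_exp_abs_ln_diff[of u "k * n" C] assms
    by (simp add: add_divide_distrib exp_add)
qed

lemma pr_prime: "prime (pr i)"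
  unfolding pr_def using enumerate_in_set[OF primes_infinite] by simp

lemma pr_gt_0: "pr i > 0"
  using prime_gt_0_nat[OF pr_prime] .

lemma real_nat_add_nat_uminus: "real (nat k) + real (nat (- k)) = \<bar>real_of_int k\<bar>"
  by (cases "k \<ge> 0") simp_all

lemma real_nat_diff_nat_uminus: "real (nat k) - real (nat (- k)) = real_of_int k"
  by (cases "k \<ge> 0") simp_all

lemma ln_prod_positive_powers:
  fixes p :: "'a \<Rightarrow> nat" and e :: "'a \<Rightarrow> int"
  assumes "finite A" and "\<And>i. i \<in> A \<Longrightarrow> p i > 0"
  shows "ln (real (\<Prod>i\<in>{i\<in>A. 0 < e i}. p i ^ nat (e i)))
           = (\<Sum>i\<in>A. real (nat (e i)) * ln (real (p i)))"
proof -
  have "(\<Prod>i\<in>{i\<in>A. 0 < e i}. p i ^ nat (e i)) = (\<Prod>i\<in>A. p i ^ nat (e i))"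
    using \<open>finite A\<close> by (simp add: prod.inter_filter) (intro prod.cong, auto)
  then show ?thesis
    using assms by (simp add: ln_prod ln_realpow)
qed

lemma resid_l1_eq:
  "resid_l1 d C N z =
     (\<Sum>c=1..d. \<bar>real_of_int (z c)\<bar> * ln (real (pr c)))
     + \<bar>C * (\<Sum>c=1..d. real_of_int (z c) * ln (real (pr c))) - C * ln (real N)\<bar>"
proof -
  have row: "(\<Sum>c=1..d. S1 d C r c * real_of_int (z c)) - tvec d C N r
               = ln (real (pr r)) * real_of_int (z r)" if "r \<in> {1..d}" for r
  proof -
    have "(\<Sum>c=1..d. S1 d C r c * real_of_int (z c))
            = (\<Sum>c=1..d. if c = r then ln (real (pr c)) * real_of_int (z c) else 0)"
      using that by (intro sum.cong) (auto simp: S1_def)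
    then show ?thesis using that by (simp add: tvec_def)
  qed
  have last_row: "(\<Sum>c=1..d. S1 d C (d + 1) c * real_of_int (z c)) - tvec d C N (d + 1)
      = C * (\<Sum>c=1..d. real_of_int (z c) * ln (real (pr c))) - C * ln (real N)"
    by (simp add: S1_def tvec_def sum_distrib_left mult_ac)
  have "ln (real (pr c)) \<ge> 0" for c
    using prime_gt_1_nat[OF pr_prime[of c]] by simp
  then have "(\<Sum>r=1..d. \<bar>ln (real (pr r)) * real_of_int (z r)\<bar>)
               = (\<Sum>c=1..d. \<bar>real_of_int (z c)\<bar> * ln (real (pr c)))"
    by (simp add: abs_mult mult.commute)
  then show ?thesis
    unfolding resid_l1_def using row last_row by simp
qed

theorem lemma2:
  fixes d N :: nat and C \<epsilon> :: real and z :: "nat \<Rightarrow> int"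
  assumes "d \<ge> 1" and "N \<ge> 1" and "C > 1"
    and "resid_l1 d C N z \<le> \<epsilon>"
  shows "\<bar>real (\<Prod>i\<in>{i\<in>{1..d}. z i > 0}. pr i ^ nat (z i))
          - real (\<Prod>i\<in>{i\<in>{1..d}. z i < 0}. pr i ^ nat (- z i)) * real N\<bar>
         \<le> sqrt (real N) / C * exp (\<epsilon> / 2)"
proof -
  define U where "U = real (\<Prod>i\<in>{i\<in>{1..d}. z i > 0}. pr i ^ nat (z i))"
  define K where "K = real (\<Prod>i\<in>{i\<in>{1..d}. z i < 0}. pr i ^ nat (- z i))"
  have "U > 0" "K > 0"
    unfolding U_def K_def using pr_gt_0 by (simp_all add: prod_pos)
  have ln_U: "ln U = (\<Sum>c=1..d. real (nat (z c)) * ln (real (pr c)))"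
    unfolding U_def using ln_prod_positive_powers[of "{1..d}" pr z] pr_gt_0 by simp
  have ln_K: "ln K = (\<Sum>c=1..d. real (nat (- z c)) * ln (real (pr c)))"
    unfolding K_def using ln_prod_positive_powers[of "{1..d}" pr "\<lambda>c. - z c"] pr_gt_0 by simp
  have "ln U + ln K = (\<Sum>c=1..d. \<bar>real_of_int (z c)\<bar> * ln (real (pr c)))"
    unfolding ln_U ln_K sum.distrib[symmetric] by (simp add: real_nat_add_nat_uminus flip: distrib_right)
  moreover have "ln U - ln K = (\<Sum>c=1..d. real_of_int (z c) * ln (real (pr c)))"
    unfolding ln_U ln_K sum_subtractf[symmetric] by (simp add: real_nat_diff_nat_uminus flip: left_diff_distrib)
  ultimately have "resid_l1 d C N z = ln U + ln K + C * \<bar>ln U - ln (K * real N)\<bar>"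
    using \<open>K > 0\<close> \<open>N \<ge> 1\<close> \<open>C > 1\<close>
    by (simp add: resid_l1_eq ln_mult abs_mult flip: right_diff_distrib)
  then have "\<bar>U - K * real N\<bar> \<le> sqrt (real N) / C * exp (resid_l1 d C N z / 2)"
    using abs_diff_mult_le_sqrt_exp[of U K "real N" C] \<open>U > 0\<close> \<open>K > 0\<close> assms(2,3) by simp
  also have "\<dots> \<le> sqrt (real N) / C * exp (\<epsilon> / 2)"
    using assms(3,4) by (intro mult_left_mono) auto
  finally show ?thesis unfolding U_def K_def .
qed

end
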